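(* Let $G$ be a finite simple graph which has a perfect matching. Then Dom has a winning strategy in the Bicolored Domination Game on $G$, both in the Sepy-start and in the Dom-start version.
   Context: For a vertex $v$ of a graph $G$, $N[v]$ denotes its closed neighborhood. The Bicolored Domination Game on an isolate-free graph $G$ is played by Dom and Sepy, who alternately color vertices; Dom may only use color $p$ and Sepy may only use color $b$. $V_p,V_b$ denote the current sets of vertices of each color. A player with color $c$ makes a move by choosing a vertex $v$ such that (i) $v$ is uncolored and (ii) there exists $u\in N[v]$ with $N[u]\cap V_c=\emptyset$ (before the move); then $v$ gets color $c$. The game terminates as soon as one of the following holds: (s* ) some vertex $v$ has $N[v]\subseteq V_p$ or $N[v]\subseteq V_b$ — Sepy wins; (d** ) for some $c\in\{p,b\}$, $V_c$ dominates all vertices of $G$ and no vertex $v$ satisfies $N[v]\subseteq V_c$ — Dom wins. In the Dom-start (Sepy-start) version Dom (Sepy) moves first. *)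

theory Defs
  imports Main
begin

definition finite_simple_graph :: "'a set \<Rightarrow> ('a \<Rightarrow> 'a \<Rightarrow> bool) \<Rightarrow> bool" where
  "finite_simple_graph V E \<longleftrightarrow> finite V \<and> (\<forall>u v. E u v \<longrightarrow> u \<in> V \<and> v \<in> V)
     \<and> (\<forall>u v. E u v \<longrightarrow> E v u) \<and> (\<forall>v. \<not> E v v)"

definition perfect_matching :: "'a set \<Rightarrow> ('a \<Rightarrow> 'a \<Rightarrow> bool) \<Rightarrow> 'a set set \<Rightarrow> bool" where
  "perfect_matching V E M \<longleftrightarrow> (\<forall>e\<in>M. \<exists>u v. e = {u, v} \<and> E u v)
     \<and> (\<forall>v\<in>V. \<exists>!e. e \<in> M \<and> v \<in> e)"

definition has_perfect_matching :: "'a set \<Rightarrow> ('a \<Rightarrow> 'a \<Rightarrow> bool) \<Rightarrow> bool" where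
  "has_perfect_matching V E \<longleftrightarrow> (\<exists>M. perfect_matching V E M)"

definition cnbh :: "'a set \<Rightarrow> ('a \<Rightarrow> 'a \<Rightarrow> bool) \<Rightarrow> 'a \<Rightarrow> 'a set" where
  "cnbh V E v = insert v {u \<in> V. E v u}"

text \<open>A legal move for the player owning colour class C (current), with other class D.\<close>
definition legal_move :: "'a set \<Rightarrow> ('a \<Rightarrow> 'a \<Rightarrow> bool) \<Rightarrow> 'a set \<Rightarrow> 'a set \<Rightarrow> 'a \<Rightarrow> bool" where
  "legal_move V E C D v \<longleftrightarrow> v \<in> V \<and> v \<notin> C \<and> v \<notin> D
     \<and> (\<exists>u\<in>cnbh V E v. cnbh V E u \<inter> C = {})"

definition sepy_cond :: "'a set \<Rightarrow> ('a \<Rightarrow> 'a \<Rightarrow> bool) \<Rightarrow> 'a set \<Rightarrow> 'a set \<Rightarrow> bool" where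
  "sepy_cond V E P B \<longleftrightarrow> (\<exists>v\<in>V. cnbh V E v \<subseteq> P \<or> cnbh V E v \<subseteq> B)"

definition dominates :: "'a set \<Rightarrow> ('a \<Rightarrow> 'a \<Rightarrow> bool) \<Rightarrow> 'a set \<Rightarrow> bool" where
  "dominates V E C \<longleftrightarrow> (\<forall>w\<in>V. cnbh V E w \<inter> C \<noteq> {})"

definition dom_cond :: "'a set \<Rightarrow> ('a \<Rightarrow> 'a \<Rightarrow> bool) \<Rightarrow> 'a set \<Rightarrow> 'a set \<Rightarrow> bool" where
  "dom_cond V E P B \<longleftrightarrow>
     (\<exists>C\<in>{P, B}. dominates V E C \<and> \<not> (\<exists>v\<in>V. cnbh V E v \<subseteq> C))"

text \<open>Positions (P, B, dom_to_move) from which Dom has a winning strategy.\<close>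
inductive dom_wins :: "'a set \<Rightarrow> ('a \<Rightarrow> 'a \<Rightarrow> bool) \<Rightarrow> 'a set \<Rightarrow> 'a set \<Rightarrow> bool \<Rightarrow> bool"
  for V E where
  won: "\<not> sepy_cond V E P B \<Longrightarrow> dom_cond V E P B \<Longrightarrow> dom_wins V E P B t"
| dom_move: "\<not> sepy_cond V E P B \<Longrightarrow> \<not> dom_cond V E P B \<Longrightarrow> legal_move V E P B v
     \<Longrightarrow> dom_wins V E (insert v P) B False \<Longrightarrow> dom_wins V E P B True"
| sepy_move: "\<not> sepy_cond V E P B \<Longrightarrow> \<not> dom_cond V E P B
     \<Longrightarrow> (\<exists>v. legal_move V E B P v)
     \<Longrightarrow> (\<forall>v. legal_move V E B P v \<longrightarrow> dom_wins V E P (insert v B) True)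
     \<Longrightarrow> dom_wins V E P B False"

end

theory Submission
  imports Defs
begin

text \<open>Dom plays a pairing strategy along a perfect matching, viewed as a fixed-point-free
  involution \<open>m\<close>. Every closed neighbourhood \<open>N[x]\<close> contains the matching edge \<open>{x, m x}\<close>, so it
  is monochromatic only if both ends of a matching edge got the same colour. Dom never takes both
  ends of an edge, and he keeps every Sepy vertex whose partner he does not own dominated, together
  with its partner, by his own colour. He maintains this by answering a Sepy move \<open>v\<close> with \<open>m v\<close>
  when this is legal, and otherwise with any vertex not yet dominated by his colour. Hence Sepy
  never wins, while Sepy always has a legal move unless her colour already satisfies (d**); since
  the graph is finite, the game ends with a win for Dom.\<close>

lemma cnbh_self: "v \<in> cnbh V E v"
  by (simp add: cnbh_def)

lemma legal_moveI:
  assumes "v \<in> V" "v \<notin> C" "v \<notin> D" "u \<in> cnbh V E v" "cnbh V E u \<inter> C = {}"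
  shows "legal_move V E C D v"
  using assms unfolding legal_move_def by blast

locale matched_graph =
  fixes V :: "'a set" and E :: "'a \<Rightarrow> 'a \<Rightarrow> bool" and m :: "'a \<Rightarrow> 'a"
  assumes finite_vertices: "finite V"
    and partner_in_V: "x \<in> V \<Longrightarrow> m x \<in> V"
    and adjacent_partner: "x \<in> V \<Longrightarrow> E x (m x)"
    and partner_neq: "x \<in> V \<Longrightarrow> m x \<noteq> x"
    and partner_partner: "x \<in> V \<Longrightarrow> m (m x) = x"
begin

lemma partner_in_cnbh: "x \<in> V \<Longrightarrow> m x \<in> cnbh V E x"
  by (simp add: cnbh_def partner_in_V adjacent_partner)

lemma in_cnbh_partner: "x \<in> V \<Longrightarrow> x \<in> cnbh V E (m x)"
  using partner_in_cnbh[of "m x"] by (simp add: partner_in_V partner_partner)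

definition safe_position :: "'a set \<Rightarrow> 'a set \<Rightarrow> bool" where
  "safe_position P B \<longleftrightarrow> P \<subseteq> V \<and> B \<subseteq> V \<and> P \<inter> B = {} \<and> (\<forall>x\<in>P. m x \<notin> P)
     \<and> (\<forall>x\<in>B. m x \<notin> P \<longrightarrow> cnbh V E x \<inter> P \<noteq> {} \<and> cnbh V E (m x) \<inter> P \<noteq> {})"

lemma safe_position_empty: "safe_position {} {}"
  by (simp add: safe_position_def)

lemma safe_position_partner_dominated:
  assumes "safe_position P B" and "x \<in> B" and "m x \<notin> P"
  shows "cnbh V E x \<inter> P \<noteq> {} \<and> cnbh V E (m x) \<inter> P \<noteq> {}"
  using assms by (simp add: safe_position_def)

lemma not_sepy_cond_if_pairs_dominated:
  assumes "\<forall>x\<in>P. m x \<notin> P" and "P \<inter> B = {}"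
    and "\<And>x. x \<in> B \<Longrightarrow> m x \<in> B \<Longrightarrow> cnbh V E x \<inter> P \<noteq> {}"
  shows "\<not> sepy_cond V E P B"
proof
  assume "sepy_cond V E P B"
  then obtain y where y: "y \<in> V" and "cnbh V E y \<subseteq> P \<or> cnbh V E y \<subseteq> B"
    unfolding sepy_cond_def by blast
  moreover have "y \<in> cnbh V E y" "m y \<in> cnbh V E y"
    using cnbh_self[of y] partner_in_cnbh[OF y] by auto
  ultimately show False
    using assms by blast
qed

lemma safe_position_not_sepy_cond:
  assumes "safe_position P B"
  shows "\<not> sepy_cond V E P B"
  using assms by (intro not_sepy_cond_if_pairs_dominated) (auto simp: safe_position_def)

lemma safe_position_sepy_move_not_sepy_cond:
  assumes safe: "safe_position P B" and move: "legal_move V E B P v"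
  shows "\<not> sepy_cond V E P (insert v B)"
proof (rule not_sepy_cond_if_pairs_dominated)
  have v: "v \<in> V" "v \<notin> P"
    using move by (auto simp: legal_move_def)
  show "\<forall>x\<in>P. m x \<notin> P" "P \<inter> insert v B = {}"
    using safe v by (auto simp: safe_position_def)
  fix x assume x: "x \<in> insert v B" and mx: "m x \<in> insert v B"
  show "cnbh V E x \<inter> P \<noteq> {}"
  proof (cases "x \<in> B")
    case True
    with mx safe v show ?thesis by (auto simp: safe_position_def)
  next
    case False
    then have "x = v" "m v \<in> B"
      using x mx partner_neq[OF v(1)] by auto
    with v show ?thesis
      using safe_position_partner_dominated[OF safe, of "m v"] by (simp add: partner_partner)
  qed
qed

lemma safe_position_sepy_can_move:
  assumes safe: "safe_position P B" and not_won: "\<not> dom_cond V E P B"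
  shows "\<exists>v. legal_move V E B P v"
proof (rule ccontr)
  assume stuck: "\<nexists>v. legal_move V E B P v"
  have "cnbh V E y \<inter> B \<noteq> {}" if y: "y \<in> V" for y
  proof
    assume undominated: "cnbh V E y \<inter> B = {}"
    then have "y \<notin> B" "m y \<notin> B"
      using cnbh_self[of y] partner_in_cnbh[OF y] by auto
    moreover have "y \<notin> P \<or> m y \<notin> P"
      using safe by (auto simp: safe_position_def)
    ultimately have "legal_move V E B P y \<or> legal_move V E B P (m y)"
      using legal_moveI[OF y _ _ cnbh_self undominated]
        legal_moveI[OF partner_in_V[OF y] _ _ in_cnbh_partner[OF y] undominated] by blast
    with stuck show False by blast
  qed
  then have "dominates V E B"
    by (simp add: dominates_def)
  moreover have "\<not> (\<exists>v\<in>V. cnbh V E v \<subseteq> B)"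
    using safe_position_not_sepy_cond[OF safe] by (simp add: sepy_cond_def)
  ultimately show False
    using not_won by (simp add: dom_cond_def)
qed

lemma safe_position_insert:
  assumes safe: "safe_position P B"
    and "v \<in> V" "v \<notin> P" and "w \<in> V" "w \<notin> insert v B" and mw: "m w \<notin> P"
    and v_safe: "m v \<notin> insert w P \<Longrightarrow>
      cnbh V E v \<inter> insert w P \<noteq> {} \<and> cnbh V E (m v) \<inter> insert w P \<noteq> {}"
  shows "safe_position (insert w P) (insert v B)"
proof -
  have "m x \<noteq> w" if "x \<in> P" for x
    using that mw safe by (auto simp: safe_position_def partner_partner)
  then have "\<forall>x\<in>insert w P. m x \<notin> insert w P"
    using safe mw partner_neq[of w] \<open>w \<in> V\<close> by (auto simp: safe_position_def)
  with assms show ?thesis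
    unfolding safe_position_def by blast
qed

text \<open>If Dom cannot take \<open>m v\<close>, then \<open>v\<close> and \<open>m v\<close> are already dominated by his colour: by the
  invariant when \<open>m v\<close> is Sepy's, and otherwise because \<open>m v\<close> is uncoloured but not a legal move
  for Dom. So any vertex not yet dominated by Dom's colour, which exists as (d**) fails, is a reply.\<close>

lemma safe_position_dom_reply:
  assumes safe: "safe_position P B" and move: "legal_move V E B P v"
    and not_won: "\<not> dom_cond V E P (insert v B)"
  shows "\<exists>w. legal_move V E P (insert v B) w \<and> safe_position (insert w P) (insert v B)"
proof -
  have v: "v \<in> V" "v \<notin> P" "v \<notin> B"
    using move by (auto simp: legal_move_def)
  have mv: "m v \<in> V" "m v \<noteq> v" "m (m v) = v"
    using v(1) partner_in_V partner_neq partner_partner by auto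
  show ?thesis
  proof (cases "m v \<notin> P \<and> m v \<notin> B \<and> legal_move V E P (insert v B) (m v)")
    case True
    then show ?thesis
      using safe_position_insert[OF safe v(1,2) mv(1)] mv v by auto
  next
    case False
    have v_dominated: "cnbh V E v \<inter> P \<noteq> {} \<and> cnbh V E (m v) \<inter> P \<noteq> {}" if "m v \<notin> P"
    proof (cases "m v \<in> B")
      case True
      then show ?thesis
        using safe_position_partner_dominated[OF safe] v(2) mv(3) by force
    next
      case mv_free: False
      then have "\<forall>u\<in>cnbh V E (m v). cnbh V E u \<inter> P \<noteq> {}"
        using False that mv(1,2) by (auto simp: legal_move_def)
      then show ?thesis
        using cnbh_self[of "m v"] in_cnbh_partner[OF v(1)] by blast
    qed
    have "\<not> dominates V E P"
      using not_won safe_position_sepy_move_not_sepy_cond[OF safe move]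
      by (auto simp: dom_cond_def sepy_cond_def)
    then obtain y where y: "y \<in> V" "cnbh V E y \<inter> P = {}"
      by (auto simp: dominates_def)
    have yP: "y \<notin> P" and myP: "m y \<notin> P"
      using y cnbh_self[of y] partner_in_cnbh[OF y(1)] by auto
    have "y \<noteq> v"
      using v_dominated y(2) myP by blast
    moreover have "y \<notin> B"
      using safe_position_partner_dominated[OF safe] y(2) myP by blast
    ultimately have "legal_move V E P (insert v B) y"
      using legal_moveI[OF y(1) yP _ cnbh_self y(2)] by blast
    moreover have "safe_position (insert y P) (insert v B)"
      using safe_position_insert[OF safe v(1,2) y(1) _ myP] v_dominated \<open>y \<noteq> v\<close> \<open>y \<notin> B\<close>
      by blast
    ultimately show ?thesis by blast
  qed
qed

lemma safe_position_dom_wins: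
  "safe_position P B \<Longrightarrow> dom_wins V E P B False"
proof (induction "card (V - (P \<union> B))" arbitrary: P B rule: less_induct)
  case less
  note safe = less.prems
  have not_lost: "\<not> sepy_cond V E P B"
    using safe_position_not_sepy_cond[OF safe] .
  show ?case
  proof (cases "dom_cond V E P B")
    case True
    then show ?thesis using not_lost dom_wins.won by blast
  next
    case not_won: False
    show ?thesis
    proof (rule dom_wins.sepy_move[OF not_lost not_won safe_position_sepy_can_move[OF safe not_won]],
        intro allI impI)
      fix v assume move: "legal_move V E B P v"
      have not_lost': "\<not> sepy_cond V E P (insert v B)"
        using safe_position_sepy_move_not_sepy_cond[OF safe move] .
      show "dom_wins V E P (insert v B) True"
      proof (cases "dom_cond V E P (insert v B)")
        case True
        then show ?thesis using not_lost' dom_wins.won by blast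
      next
        case not_won': False
        obtain w where reply: "legal_move V E P (insert v B) w"
          and safe': "safe_position (insert w P) (insert v B)"
          using safe_position_dom_reply[OF safe move not_won'] by blast
        have "V - (insert w P \<union> insert v B) \<subset> V - (P \<union> B)"
          using move reply by (auto simp: legal_move_def)
        then have "card (V - (insert w P \<union> insert v B)) < card (V - (P \<union> B))"
          using finite_vertices by (simp add: psubset_card_mono)
        then have "dom_wins V E (insert w P) (insert v B) False"
          using less.hyps safe' by blast
        then show ?thesis
          using dom_wins.dom_move[OF not_lost' not_won' reply] by blast
      qed
    qed
  qed
qed

lemma dom_wins_dom_start: "dom_wins V E {} {} True"
proof -
  have not_lost: "\<not> sepy_cond V E {} {}"
    using safe_position_not_sepy_cond[OF safe_position_empty] .
  show ?thesis
  proof (cases "V = {}")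
    case True
    then have "dom_cond V E {} {}"
      by (simp add: dom_cond_def dominates_def)
    with not_lost show ?thesis
      by (rule dom_wins.won)
  next
    case False
    then obtain w where w: "w \<in> V" by blast
    have "\<not> dom_cond V E {} {}"
      using w by (auto simp: dom_cond_def dominates_def)
    moreover have "legal_move V E {} {} w"
      using legal_moveI[OF w _ _ cnbh_self] by simp
    moreover have "safe_position {w} {}"
      using w partner_neq by (simp add: safe_position_def)
    ultimately show ?thesis
      using dom_wins.dom_move[OF not_lost] safe_position_dom_wins by blast
  qed
qed

end

lemma perfect_matching_partner:
  assumes G: "finite_simple_graph V E" and M: "perfect_matching V E M" and x: "x \<in> V"
  obtains y where "{x, y} \<in> M" "E x y"
proof -
  obtain e where e: "e \<in> M" "x \<in> e"
    using M x by (auto simp: perfect_matching_def)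
  then obtain u v where "e = {u, v}" "E u v"
    using M by (auto simp: perfect_matching_def)
  moreover have "E v u"
    using G \<open>E u v\<close> by (simp add: finite_simple_graph_def)
  ultimately show ?thesis
    using that e by (auto simp: insert_commute)
qed

lemma perfect_matching_involution:
  assumes G: "finite_simple_graph V E" and M: "perfect_matching V E M"
  shows "\<exists>m. matched_graph V E m"
proof -
  define m where "m x = (SOME y. {x, y} \<in> M \<and> E x y)" for x
  have m: "{x, m x} \<in> M" "E x (m x)" if "x \<in> V" for x
    using someI_ex[of "\<lambda>y. {x, y} \<in> M \<and> E x y"] perfect_matching_partner[OF G M that]
    unfolding m_def by blast+
  have in_V: "m x \<in> V" and neq: "m x \<noteq> x" if "x \<in> V" for x
    using m(2)[OF that] G by (auto simp: finite_simple_graph_def)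
  have "m (m x) = x" if x: "x \<in> V" for x
  proof -
    have "\<exists>!e. e \<in> M \<and> m x \<in> e"
      using M in_V[OF x] by (simp add: perfect_matching_def)
    moreover have "{m x, m (m x)} \<in> M" "{m x, x} \<in> M"
      using m[OF in_V[OF x]] m[OF x] by (auto simp: insert_commute)
    ultimately have "{m x, m (m x)} = {m x, x}"
      by blast
    then show ?thesis
      using neq[OF in_V[OF x]] by (auto simp: doubleton_eq_iff)
  qed
  then have "matched_graph V E m"
    using G in_V neq m(2) by unfold_locales (auto simp: finite_simple_graph_def)
  then show ?thesis by blast
qed

theorem proposition11:
  fixes V :: "'a set" and E :: "'a \<Rightarrow> 'a \<Rightarrow> bool"
  assumes "finite_simple_graph V E"
    and "has_perfect_matching V E"
  shows "dom_wins V E {} {} False \<and> dom_wins V E {} {} True"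
proof -
  obtain M where "perfect_matching V E M"
    using assms(2) by (auto simp: has_perfect_matching_def)
  then obtain m where "matched_graph V E m"
    using perfect_matching_involution[OF assms(1)] by blast
  then interpret matched_graph V E m .
  show ?thesis
    using safe_position_dom_wins[OF safe_position_empty] dom_wins_dom_start by blast
qed

end
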